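(* Let $n=2$, $f\in\mathcal{E}$, and let $\widetilde f$ be a harmonic extension of $f$. Then $$\|\widetilde\nabla^{1,1}\widetilde f\|^2:=\widetilde g^{I\bar L}\widetilde g^{K\bar J}\,(\partial_{\zeta_I}\partial_{\bar\zeta_J}\widetilde f)\,(\partial_{\zeta_K}\partial_{\bar\zeta_L}\widetilde f)$$ vanishes identically on $\mathcal{N}$.
   Context: For $n=2$: on $\mathbb{C}^{3}$ with coordinates $\zeta=(\zeta_0,\zeta_1,\zeta_2)$ put $L(\zeta)=|\zeta_0|^2-|\zeta_1|^2-|\zeta_2|^2$, $\mathcal{N}=\{\zeta\ne0:L=0\}$, $\Delta=\partial_{\zeta_0}\partial_{\bar\zeta_0}-\partial_{\zeta_1}\partial_{\bar\zeta_1}-\partial_{\zeta_2}\partial_{\bar\zeta_2}$, $\widetilde g^{K\bar L}=\mathrm{diag}(1,-1,-1)$ (summation over repeated indices). $\mathcal{E}=\{f\in C^\infty(\mathcal{N},\mathbb{R}):f(\lambda\zeta)=f(\zeta)\ \forall\lambda\in\mathbb{C}^*\}$. A harmonic extension of $f\in\mathcal{E}$ is a smooth $\widetilde f$ on $\mathbb{C}^{3}\setminus\{0\}$ with $\widetilde f(\lambda\zeta)=\widetilde f(\zeta)$, $\widetilde f|_{\mathcal{N}}=f$, and $\Delta\widetilde f=L\,h$ for some smooth $h$. *)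

theory Defs
  imports "HOL-Analysis.Analysis"
begin

text \<open>Points of C^3 with coordinates zeta_0, zeta_1, zeta_2 (indices 0,1,2 of the type 3).\<close>
type_synonym C3 = "complex ^ 3"

definition Lform :: "C3 \<Rightarrow> real" where
  "Lform z = (cmod (z $ 0))^2 - (cmod (z $ 1))^2 - (cmod (z $ 2))^2"

definition nullcone :: "C3 set" where
  "nullcone = {z. z \<noteq> 0 \<and> Lform z = 0}"

fun iter_dd :: "'a::real_normed_vector list \<Rightarrow> ('a \<Rightarrow> 'b::real_normed_vector) \<Rightarrow> 'a \<Rightarrow> 'b" where
  "iter_dd [] f = f"
| "iter_dd (v # vs) f = (\<lambda>x. frechet_derivative (iter_dd vs f) (at x) v)"

definition smooth_on :: "'a::real_normed_vector set \<Rightarrow> ('a \<Rightarrow> 'b::real_normed_vector) \<Rightarrow> bool" where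
  "smooth_on S f \<longleftrightarrow> open S \<and> (\<forall>vs. iter_dd vs f differentiable_on S)"

definition wirt :: "3 \<Rightarrow> (C3 \<Rightarrow> complex) \<Rightarrow> C3 \<Rightarrow> complex" where
  "wirt j g z = (frechet_derivative g (at z) (axis j 1)
                 - \<i> * frechet_derivative g (at z) (axis j \<i>)) / 2"

definition wirt_bar :: "3 \<Rightarrow> (C3 \<Rightarrow> complex) \<Rightarrow> C3 \<Rightarrow> complex" where
  "wirt_bar j g z = (frechet_derivative g (at z) (axis j 1)
                 + \<i> * frechet_derivative g (at z) (axis j \<i>)) / 2"

definition sgnL :: "3 \<Rightarrow> real" where
  "sgnL k = (if k = 0 then 1 else -1)"

definition ginv :: "3 \<Rightarrow> 3 \<Rightarrow> real" where
  "ginv k l = (if k = l then sgnL k else 0)"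

definition Delta :: "(C3 \<Rightarrow> real) \<Rightarrow> C3 \<Rightarrow> complex" where
  "Delta F z = (\<Sum>k\<in>UNIV. of_real (sgnL k) * wirt k (wirt_bar k (\<lambda>w. of_real (F w))) z)"

definition Espace :: "(C3 \<Rightarrow> real) set" where
  "Espace = {f. (\<exists>U g. open U \<and> nullcone \<subseteq> U \<and> smooth_on U (g :: C3 \<Rightarrow> real)
                     \<and> (\<forall>z\<in>nullcone. g z = f z))
              \<and> (\<forall>z\<in>nullcone. \<forall>c::complex. c \<noteq> 0 \<longrightarrow> f (c *s z) = f z)}"

definition harmonic_extension :: "(C3 \<Rightarrow> real) \<Rightarrow> (C3 \<Rightarrow> real) \<Rightarrow> bool" where
  "harmonic_extension f F \<longleftrightarrow>
     smooth_on (UNIV - {0}) F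
   \<and> (\<forall>z. z \<noteq> 0 \<longrightarrow> (\<forall>c::complex. c \<noteq> 0 \<longrightarrow> F (c *s z) = F z))
   \<and> (\<forall>z\<in>nullcone. F z = f z)
   \<and> (\<exists>h :: C3 \<Rightarrow> real. smooth_on (UNIV - {0}) h
        \<and> (\<forall>z. z \<noteq> 0 \<longrightarrow> Delta F z = of_real (Lform z * h z)))"

definition cHess :: "(C3 \<Rightarrow> real) \<Rightarrow> 3 \<Rightarrow> 3 \<Rightarrow> C3 \<Rightarrow> complex" where
  "cHess F i j z = wirt i (wirt_bar j (\<lambda>w. of_real (F w))) z"

definition hess11_normsq :: "(C3 \<Rightarrow> real) \<Rightarrow> C3 \<Rightarrow> complex" where
  "hess11_normsq F z = (\<Sum>i\<in>UNIV. \<Sum>l\<in>UNIV. \<Sum>k\<in>UNIV. \<Sum>j\<in>UNIV.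
       of_real (ginv i l * ginv k j) * cHess F i j z * cHess F k l z)"

end

theory Submission
  imports Defs
begin

text \<open>Fix z on the null cone, let H be the complex Hessian of F at z and M = g^-1 H, so that
  the quantity in question is tr(M^2), while tr M = \<Delta>F(z) = L(z) h(z) = 0. Invariance of F
  under C^* gives the Euler identity \<Sum> cnj(w_J) \<partial>F/\<partial>cnj(w_J) = 0; applying \<partial>/\<partial>w_I to
  it shows M cnj(z) = 0. Moreover \<partial>F/\<partial>cnj(w_J) is homogeneous of bidegree (0,-1), so its
  holomorphic Euler derivative vanishes, i.e. (g z)^T M = 0. The two null vectors g z and
  cnj(z) pair to L(z) = 0, and for a traceless 3x3 matrix this forces tr(M^2) = 0.\<close>

lemma bounded_linear_vector_scalar_mult_left: "bounded_linear (\<lambda>c::complex. c *s (v::complex^'n))"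
  by (rule linear_conv_bounded_linear[THEN iffD1], rule linearI)
    (auto simp: vec_eq_iff algebra_simps complex_eq_iff)

lemma bounded_linear_vector_scalar_mult_right: "bounded_linear (\<lambda>v::complex^'n. c *s v)"
  by (rule linear_conv_bounded_linear[THEN iffD1], rule linearI)
    (auto simp: vec_eq_iff algebra_simps complex_eq_iff)

lemma vector_scalar_mult_eq_scaleR_Re_Im:
  "(c::complex) *s (v::complex^'n) = Re c *\<^sub>R v + Im c *\<^sub>R (\<i> *s v)"
  by (auto simp: vec_eq_iff algebra_simps complex_eq_iff)

lemma linear_vector_scalar_mult_cnj:
  fixes l :: "complex^'n \<Rightarrow> complex"
  assumes "linear l"
  shows "l (c *s v) + \<i> * l (c *s (\<i> *s v)) = cnj c * (l v + \<i> * l (\<i> *s v))"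
proof -
  have "c *s (\<i> *s v) = Re c *\<^sub>R (\<i> *s v) - Im c *\<^sub>R v"
    by (auto simp: vec_eq_iff algebra_simps complex_eq_iff)
  then have ci: "l (c *s (\<i> *s v)) = Re c *\<^sub>R l (\<i> *s v) - Im c *\<^sub>R l v"
    and c: "l (c *s v) = Re c *\<^sub>R l v + Im c *\<^sub>R l (\<i> *s v)"
    by (simp_all only: vector_scalar_mult_eq_scaleR_Re_Im[of c v] linear_add[OF assms]
        linear_diff[OF assms] linear_scale[OF assms])
  moreover have cn: "cnj c = of_real (Re c) - \<i> * of_real (Im c)"
    by (simp add: complex_eq_iff)
  ultimately show ?thesis
    unfolding ci c cn by (simp add: scaleR_conv_of_real algebra_simps)
qed

lemma derivative_along_orbit:
  fixes G :: "complex^'n \<Rightarrow> complex"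
  assumes G: "(G has_derivative G') (at z)"
    and \<psi>: "(\<psi> has_derivative \<psi>') (at 1)" "\<psi> 1 = 1"
    and orbit: "\<forall>c. c \<noteq> 0 \<longrightarrow> \<psi> c * G (c *s z) = G z"
  shows "\<psi>' \<delta> * G z + G' (\<delta> *s z) = 0"
proof -
  have orbit_map: "((\<lambda>c. G (c *s z)) has_derivative (\<lambda>\<delta>. G' (\<delta> *s z))) (at 1)"
    using has_derivative_compose[OF bounded_linear_imp_has_derivative
        [OF bounded_linear_vector_scalar_mult_left], of G] G by simp
  then have "((\<lambda>c. \<psi> c * G (c *s z)) has_derivative (\<lambda>\<delta>. \<psi>' \<delta> * G z + G' (\<delta> *s z))) (at 1)"
    using has_derivative_mult[OF \<psi>(1) orbit_map] by (simp add: \<psi>(2) add.commute)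
  moreover have "((\<lambda>c. \<psi> c * G (c *s z)) has_derivative (\<lambda>_. 0)) (at 1)"
    by (rule has_derivative_transform_within_open[of "\<lambda>_. G z" _ _ _ "UNIV - {0}"])
      (use orbit in auto)
  ultimately have "(\<lambda>\<delta>. \<psi>' \<delta> * G z + G' (\<delta> *s z)) = (\<lambda>_. 0)"
    by (rule has_derivative_unique)
  then show ?thesis
    by (simp add: fun_eq_iff)
qed

lemma derivative_of_scale_invariant:
  fixes G :: "complex^'n \<Rightarrow> 'b::real_normed_vector"
  assumes "open S" "z \<in> S" "\<forall>w\<in>S. G (c *s w) = G w"
    and "(G has_derivative D) (at z)" and "(G has_derivative D') (at (c *s z))"
  shows "D' (c *s v) = D v"
proof -
  have "((\<lambda>w. G (c *s w)) has_derivative (\<lambda>v. D' (c *s v))) (at z)"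
    using has_derivative_compose[OF bounded_linear_imp_has_derivative
        [OF bounded_linear_vector_scalar_mult_right] assms(5)] .
  moreover have "((\<lambda>w. G (c *s w)) has_derivative D) (at z)"
    by (rule has_derivative_transform_within_open[OF assms(4,1,2)]) (use assms(3) in auto)
  ultimately have "(\<lambda>v. D' (c *s v)) = D"
    by (rule has_derivative_unique)
  then show ?thesis
    by (simp add: fun_eq_iff)
qed

lemma wirt_eq:
  assumes "(G has_derivative G') (at z)"
  shows "wirt j G z = (G' (axis j 1) - \<i> * G' (axis j \<i>)) / 2"
  using frechet_derivative_at[OF assms] by (simp add: wirt_def)

lemma wirt_bar_eq:
  assumes "(G has_derivative G') (at z)"
  shows "wirt_bar j G z = (G' (axis j 1) + \<i> * G' (axis j \<i>)) / 2"
  using frechet_derivative_at[OF assms] by (simp add: wirt_bar_def)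

lemma linear_expansion_C3:
  fixes l :: "C3 \<Rightarrow> 'b::real_vector" and z :: C3
  assumes "linear l"
  shows "l z = (\<Sum>i\<in>UNIV. Re (z$i) *\<^sub>R l (axis i 1) + Im (z$i) *\<^sub>R l (axis i \<i>))"
    and "l (\<i> *s z) = (\<Sum>i\<in>UNIV. Re (z$i) *\<^sub>R l (axis i \<i>) - Im (z$i) *\<^sub>R l (axis i 1))"
proof -
  have z: "z = (\<Sum>i\<in>UNIV. Re (z$i) *\<^sub>R axis i 1 + Im (z$i) *\<^sub>R axis i \<i>)"
    and iz: "\<i> *s z = (\<Sum>i\<in>UNIV. Re (z$i) *\<^sub>R axis i \<i> - Im (z$i) *\<^sub>R axis i 1)"
    by (auto simp: vec_eq_iff forall_3 sum_3 axis_def complex_eq_iff)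
  show "l z = (\<Sum>i\<in>UNIV. Re (z$i) *\<^sub>R l (axis i 1) + Im (z$i) *\<^sub>R l (axis i \<i>))"
    using arg_cong[OF z, of l]
    by (simp only: linear_sum[OF assms] linear_add[OF assms] linear_scale[OF assms])
  show "l (\<i> *s z) = (\<Sum>i\<in>UNIV. Re (z$i) *\<^sub>R l (axis i \<i>) - Im (z$i) *\<^sub>R l (axis i 1))"
    using arg_cong[OF iz, of l]
    by (simp only: linear_sum[OF assms] linear_diff[OF assms] linear_scale[OF assms])
qed

lemma sum_mult_wirt:
  assumes "(G has_derivative G') (at z)"
  shows "(\<Sum>i\<in>UNIV. z$i * wirt i G z) = (G' z - \<i> * G' (\<i> *s z)) / 2"
proof -
  let ?A = "\<lambda>i. G' (axis i 1)" and ?B = "\<lambda>i. G' (axis i \<i>)"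
  have "w * ((A - \<i> * B) / 2) = (Re w *\<^sub>R A + Im w *\<^sub>R B - \<i> * (Re w *\<^sub>R B - Im w *\<^sub>R A)) / 2"
    for w A B :: complex
    by (subst (1) complex_eq[of w]) (simp add: scaleR_conv_of_real algebra_simps)
  then have "(\<Sum>i\<in>UNIV. z$i * wirt i G z) = (\<Sum>i\<in>UNIV.
      (Re (z$i) *\<^sub>R ?A i + Im (z$i) *\<^sub>R ?B i - \<i> * (Re (z$i) *\<^sub>R ?B i - Im (z$i) *\<^sub>R ?A i)) / 2)"
    by (simp add: wirt_eq[OF assms])
  also have "\<dots> = (G' z - \<i> * G' (\<i> *s z)) / 2"
    unfolding linear_expansion_C3[OF has_derivative_linear[OF assms], of z]
    by (simp add: sum_3 field_simps)
  finally show ?thesis .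
qed

lemma sum_cnj_mult_wirt_bar:
  assumes "(G has_derivative G') (at z)"
  shows "(\<Sum>i\<in>UNIV. cnj (z$i) * wirt_bar i G z) = (G' z + \<i> * G' (\<i> *s z)) / 2"
proof -
  let ?A = "\<lambda>i. G' (axis i 1)" and ?B = "\<lambda>i. G' (axis i \<i>)"
  have "cnj w * ((A + \<i> * B) / 2) = (Re w *\<^sub>R A + Im w *\<^sub>R B + \<i> * (Re w *\<^sub>R B - Im w *\<^sub>R A)) / 2"
    for w A B :: complex
    by (subst (1) complex_eq[of w]) (simp add: scaleR_conv_of_real algebra_simps)
  then have "(\<Sum>i\<in>UNIV. cnj (z$i) * wirt_bar i G z) = (\<Sum>i\<in>UNIV.
      (Re (z$i) *\<^sub>R ?A i + Im (z$i) *\<^sub>R ?B i + \<i> * (Re (z$i) *\<^sub>R ?B i - Im (z$i) *\<^sub>R ?A i)) / 2)"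
    by (simp add: wirt_bar_eq[OF assms])
  also have "\<dots> = (G' z + \<i> * G' (\<i> *s z)) / 2"
    unfolding linear_expansion_C3[OF has_derivative_linear[OF assms], of z]
    by (simp add: sum_3 field_simps)
  finally show ?thesis .
qed

lemma sum_mult_wirt_eq_0_if_cnj_homogeneous:
  assumes "G differentiable (at z)"
    and "\<forall>c. c \<noteq> 0 \<longrightarrow> cnj c * G (c *s z) = G z"
  shows "(\<Sum>i\<in>UNIV. z$i * wirt i G z) = 0"
proof -
  obtain G' where G': "(G has_derivative G') (at z)"
    using assms(1) unfolding differentiable_def by blast
  have "(cnj has_derivative cnj) (at 1)"
    by (rule bounded_linear_imp_has_derivative[OF bounded_linear_cnj])
  then have orbit: "cnj \<delta> * G z + G' (\<delta> *s z) = 0" for \<delta>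
    by (rule derivative_along_orbit[OF G' _ _ assms(2)]) simp
  have "G' z = - G z" "G' (\<i> *s z) = \<i> * G z"
    using orbit[of 1] orbit[of \<i>] by (simp_all add: add_eq_0_iff)
  then show ?thesis
    unfolding sum_mult_wirt[OF G'] by simp
qed

lemma sum_cnj_mult_wirt_bar_eq_0_if_invariant:
  assumes "G differentiable (at z)"
    and "\<forall>c. c \<noteq> 0 \<longrightarrow> G (c *s z) = G z"
  shows "(\<Sum>i\<in>UNIV. cnj (z$i) * wirt_bar i G z) = 0"
proof -
  obtain G' where G': "(G has_derivative G') (at z)"
    using assms(1) unfolding differentiable_def by blast
  have "0 * G z + G' (\<delta> *s z) = 0" for \<delta>
    by (rule derivative_along_orbit[OF G' has_derivative_const]) (use assms(2) in auto)
  then have orbit: "G' (\<delta> *s z) = 0" for \<delta>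
    by simp
  show ?thesis
    unfolding sum_cnj_mult_wirt_bar[OF G'] using orbit[of 1] orbit[of \<i>] by simp
qed

lemma sum_cnj_mult_wirt_eq_0:
  assumes "open S" "z \<in> S"
    and zero: "\<forall>w\<in>S. (\<Sum>j\<in>UNIV. cnj (w$j) * G j w) = 0"
    and diff: "\<And>j. G j differentiable (at z)"
  shows "(\<Sum>j\<in>UNIV. cnj (z$j) * wirt i (G j) z) = 0"
proof -
  obtain G' where G': "\<And>j. (G j has_derivative G' j) (at z)"
    using diff unfolding differentiable_def by metis
  let ?E' = "\<lambda>v. \<Sum>j\<in>UNIV. cnj (z$j) * G' j v + cnj (v$j) * G j z"
  have "((\<lambda>w. \<Sum>j\<in>UNIV. cnj (w$j) * G j w) has_derivative ?E') (at z)"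
    by (intro has_derivative_sum has_derivative_mult has_derivative_cnj G'
        bounded_linear_imp_has_derivative bounded_linear_vec_nth)
  moreover have "((\<lambda>w. \<Sum>j\<in>UNIV. cnj (w$j) * G j w) has_derivative (\<lambda>_. 0)) (at z)"
    by (rule has_derivative_transform_within_open[of "\<lambda>_. 0" _ _ _ S]) (use assms in auto)
  ultimately have "?E' = (\<lambda>_. 0)"
    by (rule has_derivative_unique)
  then have E'_eq_0: "?E' v = 0" for v
    by (simp add: fun_eq_iff)
  \<comment> \<open>\<partial>/\<partial>w_i annihilates the antiholomorphic coefficients cnj(w_j)\<close>
  have "cnj (z$j) * G' j (axis i 1) + cnj (axis i 1 $ j) * G j z
      - \<i> * (cnj (z$j) * G' j (axis i \<i>) + cnj (axis i \<i> $ j) * G j z)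
      = 2 * (cnj (z$j) * wirt i (G j) z)" for j
    by (simp add: wirt_eq[OF G'] axis_def algebra_simps)
  then have "?E' (axis i 1) - \<i> * ?E' (axis i \<i>) = 2 * (\<Sum>j\<in>UNIV. cnj (z$j) * wirt i (G j) z)"
    unfolding sum_distrib_left sum_subtractf[symmetric] by simp
  then show ?thesis
    using E'_eq_0[of "axis i 1"] E'_eq_0[of "axis i \<i>"] by simp
qed

lemma vector_scalar_mult_i_axis: "\<i> *s axis j (1::complex) = axis j \<i>"
  by (auto simp: vec_eq_iff axis_def)

lemma wirt_bar_cnj_homogeneous:
  fixes G :: "C3 \<Rightarrow> complex"
  assumes inv: "\<forall>w. w \<noteq> 0 \<longrightarrow> G (c *s w) = G w"
    and diff: "\<And>w. w \<noteq> 0 \<Longrightarrow> G differentiable (at w)"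
    and "z \<noteq> 0" "c \<noteq> 0"
  shows "cnj c * wirt_bar j G (c *s z) = wirt_bar j G z"
proof -
  have "c *s z \<noteq> 0"
    using assms(3,4) by (auto simp: vec_eq_iff)
  then obtain D D' where D: "(G has_derivative D) (at z)" and D': "(G has_derivative D') (at (c *s z))"
    using diff assms(3) unfolding differentiable_def by blast
  have scale: "D v = D' (c *s v)" for v
    by (rule derivative_of_scale_invariant[OF _ _ _ D D', of "UNIV - {0}", symmetric])
      (use inv assms(3) in auto)
  have "wirt_bar j G z = (D (axis j 1) + \<i> * D (\<i> *s axis j 1)) / 2"
    by (simp only: wirt_bar_eq[OF D] vector_scalar_mult_i_axis)
  also have "\<dots> = (D' (c *s axis j 1) + \<i> * D' (c *s (\<i> *s axis j 1))) / 2"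
    by (simp only: scale)
  also have "\<dots> = cnj c * ((D' (axis j 1) + \<i> * D' (\<i> *s axis j 1)) / 2)"
    unfolding linear_vector_scalar_mult_cnj[OF has_derivative_linear[OF D']] by simp
  also have "\<dots> = cnj c * wirt_bar j G (c *s z)"
    by (simp only: wirt_bar_eq[OF D'] vector_scalar_mult_i_axis)
  finally show ?thesis
    by (rule sym)
qed

lemma smooth_on_differentiable_at:
  assumes "smooth_on S f" "x \<in> S"
  shows "f differentiable (at x)"
    and "(\<lambda>y. frechet_derivative f (at y) v) differentiable (at x)"
proof -
  have "open S" "iter_dd [] f differentiable_on S" "iter_dd [v] f differentiable_on S"
    using assms(1) unfolding smooth_on_def by blast+
  then show "f differentiable (at x)" "(\<lambda>y. frechet_derivative f (at y) v) differentiable (at x)"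
    using assms(2) by (auto simp: differentiable_on_eq_differentiable_at)
qed

lemma differentiable_of_real_comp:
  assumes "f differentiable (at x)"
  shows "(\<lambda>y. complex_of_real (f y)) differentiable (at x)"
  using assms has_derivative_of_real unfolding differentiable_def by blast

lemma differentiable_wirt_bar_of_real:
  assumes "smooth_on S F" "z \<in> S"
  shows "wirt_bar j (\<lambda>w. complex_of_real (F w)) differentiable (at z)"
proof -
  let ?d = "\<lambda>v y. complex_of_real (frechet_derivative F (at y) v)"
  have "open S"
    using assms(1) by (simp add: smooth_on_def)
  have eq: "(?d (axis j 1) y + \<i> * ?d (axis j \<i>) y) / 2 = wirt_bar j (\<lambda>w. complex_of_real (F w)) y"
    if "y \<in> S" for y
  proof -
    have "(F has_derivative frechet_derivative F (at y)) (at y)"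
      using smooth_on_differentiable_at(1)[OF assms(1) that] frechet_derivative_works by blast
    from wirt_bar_eq[OF has_derivative_of_real[OF this]] show ?thesis
      by simp
  qed
  have "(\<lambda>y. (?d (axis j 1) y + \<i> * ?d (axis j \<i>) y) / 2) differentiable (at z)"
    using differentiable_of_real_comp[OF smooth_on_differentiable_at(2)[OF assms]] by simp
  then obtain D where "((\<lambda>y. (?d (axis j 1) y + \<i> * ?d (axis j \<i>) y) / 2) has_derivative D) (at z)"
    unfolding differentiable_def by blast
  then have "(wirt_bar j (\<lambda>w. complex_of_real (F w)) has_derivative D) (at z)"
    by (rule has_derivative_transform_within_open[OF _ \<open>open S\<close> assms(2) eq])
  then show ?thesis
    by (rule differentiableI)
qed

lemma cHess_row_eq_0:
  assumes sm: "smooth_on (UNIV - {0}) F"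
    and inv: "\<forall>w. w \<noteq> 0 \<longrightarrow> (\<forall>c::complex. c \<noteq> 0 \<longrightarrow> F (c *s w) = F w)"
    and "z \<noteq> 0"
  shows "(\<Sum>i\<in>UNIV. z$i * cHess F i j z) = 0"
  unfolding cHess_def
proof (rule sum_mult_wirt_eq_0_if_cnj_homogeneous)
  let ?G = "\<lambda>w. complex_of_real (F w)"
  have diff: "?G differentiable (at w)" if "w \<noteq> 0" for w
    using differentiable_of_real_comp[OF smooth_on_differentiable_at(1)[OF sm]] that by blast
  show "wirt_bar j ?G differentiable (at z)"
    using differentiable_wirt_bar_of_real[OF sm] assms(3) by blast
  show "\<forall>c. c \<noteq> 0 \<longrightarrow> cnj c * wirt_bar j ?G (c *s z) = wirt_bar j ?G z"
  proof (intro allI impI)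
    fix c :: complex
    assume "c \<noteq> 0"
    with inv show "cnj c * wirt_bar j ?G (c *s z) = wirt_bar j ?G z"
      by (intro wirt_bar_cnj_homogeneous[OF _ diff assms(3)]) auto
  qed
qed

lemma cHess_col_eq_0:
  assumes sm: "smooth_on (UNIV - {0}) F"
    and inv: "\<forall>w. w \<noteq> 0 \<longrightarrow> (\<forall>c::complex. c \<noteq> 0 \<longrightarrow> F (c *s w) = F w)"
    and "z \<noteq> 0"
  shows "(\<Sum>j\<in>UNIV. cnj (z$j) * cHess F i j z) = 0"
  unfolding cHess_def
proof (rule sum_cnj_mult_wirt_eq_0[of "UNIV - {0}"])
  let ?G = "\<lambda>w. complex_of_real (F w)"
  show "\<forall>w\<in>UNIV - {0}. (\<Sum>j\<in>UNIV. cnj (w$j) * wirt_bar j ?G w) = 0"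
  proof
    fix w :: C3
    assume "w \<in> UNIV - {0}"
    with inv show "(\<Sum>j\<in>UNIV. cnj (w$j) * wirt_bar j ?G w) = 0"
      by (intro sum_cnj_mult_wirt_bar_eq_0_if_invariant
          differentiable_of_real_comp[OF smooth_on_differentiable_at(1)[OF sm]]) auto
  qed
  show "wirt_bar j ?G differentiable (at z)" for j
    using differentiable_wirt_bar_of_real[OF sm] assms(3) by blast
qed (use assms(3) in auto)

text \<open>The range of M lies in the plane P = {v. x\<bullet>v = 0} (bilinear pairing), which contains
  y \<in> ker M; in a basis adapted to the flag span y \<subseteq> P \<subseteq> C^3, M is upper triangular with
  diagonal (0, tr M, 0).\<close>

lemma trace_square_eq_0:
  fixes M :: "complex^3^3" and x y :: "complex^3"
  assumes "x v* M = 0" and "M *v y = 0" and "trace M = 0" and "(\<Sum>i\<in>UNIV. x$i * y$i) = 0"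
    and "x \<noteq> 0" and "y \<noteq> 0"
  shows "trace (M ** M) = 0"
proof -
  have "(x v* M) $ j = 0" "(M *v y) $ j = 0" for j
    using assms(1,2) by simp_all
  then have left: "x$1 * M$1$j + x$2 * M$2$j + x$3 * M$3$j = 0"
    and right: "M$j$1 * y$1 + M$j$2 * y$2 + M$j$3 * y$3 = 0" for j
    by (simp_all add: sum_3 matrix_vector_mult_def vector_matrix_mult_def)
  have tr: "M$1$1 + M$2$2 + M$3$3 = 0" and xy: "x$1 * y$1 + x$2 * y$2 + x$3 * y$3 = 0"
    using assms(3,4) by (simp_all add: trace_def sum_3)
  have sq: "trace (M ** M) = M$1$1 * M$1$1 + M$1$2 * M$2$1 + M$1$3 * M$3$1
      + M$2$1 * M$1$2 + M$2$2 * M$2$2 + M$2$3 * M$3$2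
      + M$3$1 * M$1$3 + M$3$2 * M$2$3 + M$3$3 * M$3$3"
    by (simp add: trace_def matrix_matrix_mult_def sum_3 algebra_simps)
  have "x$1 * y$1 * trace (M ** M) = 0" "x$1 * y$2 * trace (M ** M) = 0"
    "x$1 * y$3 * trace (M ** M) = 0" "x$2 * y$1 * trace (M ** M) = 0"
    "x$2 * y$2 * trace (M ** M) = 0" "x$2 * y$3 * trace (M ** M) = 0"
    "x$3 * y$1 * trace (M ** M) = 0" "x$3 * y$2 * trace (M ** M) = 0"
    "x$3 * y$3 * trace (M ** M) = 0"
    using left[of 1] left[of 2] left[of 3] right[of 1] right[of 2] right[of 3] tr xy
    unfolding sq by algebra+
  then have "x$k * y$l * trace (M ** M) = 0" for k l
    using exhaust_3[of k] exhaust_3[of l] by fastforce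
  moreover obtain k l where "x$k \<noteq> 0" "y$l \<noteq> 0"
    using assms(5,6) by (metis vec_eq_iff zero_index)
  ultimately show ?thesis
    by (metis mult_eq_0_iff)
qed

definition cHess_raised :: "(C3 \<Rightarrow> real) \<Rightarrow> C3 \<Rightarrow> complex^3^3" where
  "cHess_raised F z = (\<chi> i j. of_real (sgnL i) * cHess F i j z)"

lemma hess11_normsq_eq_trace: "hess11_normsq F z = trace (cHess_raised F z ** cHess_raised F z)"
  by (simp add: hess11_normsq_def trace_def matrix_matrix_mult_def cHess_raised_def ginv_def
      sum_3 algebra_simps)

lemma trace_cHess_raised: "trace (cHess_raised F z) = Delta F z"
  by (simp add: trace_def cHess_raised_def Delta_def cHess_def)

lemma cHess_raised_left_null:
  assumes "smooth_on (UNIV - {0}) F"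
    and "\<forall>w. w \<noteq> 0 \<longrightarrow> (\<forall>c::complex. c \<noteq> 0 \<longrightarrow> F (c *s w) = F w)"
    and "z \<noteq> 0"
  shows "(\<chi> i. of_real (sgnL i) * z$i) v* cHess_raised F z = 0"
  using cHess_row_eq_0[OF assms]
  by (simp add: vec_eq_iff vector_matrix_mult_def cHess_raised_def sum_3 sgnL_def)

lemma cHess_raised_right_null:
  assumes "smooth_on (UNIV - {0}) F"
    and "\<forall>w. w \<noteq> 0 \<longrightarrow> (\<forall>c::complex. c \<noteq> 0 \<longrightarrow> F (c *s w) = F w)"
    and "z \<noteq> 0"
  shows "cHess_raised F z *v (\<chi> j. cnj (z$j)) = 0"
proof -
  have "(cHess_raised F z *v (\<chi> j. cnj (z$j))) $ i
      = of_real (sgnL i) * (\<Sum>j\<in>UNIV. cnj (z$j) * cHess F i j z)" for i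
    by (simp add: matrix_vector_mult_def cHess_raised_def sum_distrib_left algebra_simps)
  then show ?thesis
    using cHess_col_eq_0[OF assms] by (simp add: vec_eq_iff)
qed

lemma Lform_eq_sum: "of_real (Lform z) = (\<Sum>i\<in>UNIV. of_real (sgnL i) * z$i * cnj (z$i))"
proof -
  have "z$i * cnj (z$i) = of_real ((cmod (z$i))\<^sup>2)" for i
    by (rule complex_norm_square[symmetric])
  \<comment> \<open>Lform uses the index 0, sum_3 the index 3; they coincide in the type 3.\<close>
  moreover have three: "(3::3) = 0"
    by simp
  ultimately show ?thesis
    by (simp add: Lform_def sum_3 sgnL_def mult.assoc three)
qed

theorem mainTheorem7:
  fixes f F :: "complex ^ 3 \<Rightarrow> real"
  assumes "f \<in> Espace"
    and "harmonic_extension f F"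
  shows "\<forall>z\<in>nullcone. hess11_normsq F z = 0"
proof
  \<comment> \<open>Only the extension F matters.\<close>
  fix z assume "z \<in> nullcone"
  then have z: "z \<noteq> 0" and null: "Lform z = 0"
    by (auto simp: nullcone_def)
  obtain h where sm: "smooth_on (UNIV - {0}) F"
    and inv: "\<forall>w. w \<noteq> 0 \<longrightarrow> (\<forall>c::complex. c \<noteq> 0 \<longrightarrow> F (c *s w) = F w)"
    and harm: "Delta F z = of_real (Lform z * h z)"
    using assms(2) z unfolding harmonic_extension_def by blast
  obtain k where "z$k \<noteq> 0"
    using z by (metis vec_eq_iff zero_index)
  then have "(\<chi> i. of_real (sgnL i) * z$i) $ k \<noteq> 0" "(\<chi> j. cnj (z$j)) $ k \<noteq> 0"
    by (simp_all add: sgnL_def)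
  then have "(\<chi> i. of_real (sgnL i) * z$i) \<noteq> 0" "(\<chi> j. cnj (z$j)) \<noteq> 0"
    by (metis zero_index)+
  then have "trace (cHess_raised F z ** cHess_raised F z) = 0"
    using harm null Lform_eq_sum[of z]
    by (intro trace_square_eq_0[where x = "\<chi> i. of_real (sgnL i) * z$i" and y = "\<chi> j. cnj (z$j)"]
        cHess_raised_left_null[OF sm inv z] cHess_raised_right_null[OF sm inv z])
      (auto simp: trace_cHess_raised)
  then show "hess11_normsq F z = 0"
    by (simp add: hess11_normsq_eq_trace)
qed

end
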